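(* Let $K\ge 2$, let $T\ge1$, and let $\mathbf{x}(t)\in[0,1]^K$, $t=1,\dots,T$, be any fixed sequence of reward vectors. Run the algorithm REX3 described in the context with transfer function $\psi$ equal to the identity and parameter $\gamma\in(0,\tfrac12)$. Then $$\mathbb{G}_{max}-\mathbb{E}(\mathbb{G}_{alg})\le \frac{K}{\gamma}\ln(K)+\gamma\tau,\qquad \text{where } \tau=e\cdot\mathbb{E}\mathbb{G}_{alg}-(4-e)\cdot\mathbb{E}\mathbb{G}_{unif}.$$
   Context: Adversarial utility-based dueling bandit setting: there are $K$ arms; before play, an (oblivious) environment fixes a horizon $T$ and reward vectors $\mathbf{x}(t)=(x_1(t),\dots,x_K(t))\in[0,1]^K$ for $t=1,\dots,T$. At each round the learner selects a pair of arms $(a_t,b_t)$ and observes only the relative feedback $\psi(x_{a_t}(t)-x_{b_t}(t))$, here with $\psi(z)=z$. Algorithm REX3 with parameter $\gamma$: initialize $w_i(1)=1$ for all $i$. At each round $t$: set $p_i(t)=(1-\gamma)\frac{w_i(t)}{\sum_{j=1}^K w_j(t)}+\frac{\gamma}{K}$; draw two arms $a_t,b_t$ independently according to $\mathbf{p}(t)=(p_1(t),\dots,p_K(t))$; receive $\psi(x_{a_t}(t)-x_{b_t}(t))$; if $a_t\neq b_t$, set $w_{a_t}(t+1)=w_{a_t}(t)\exp\!\big(\frac{\gamma}{K}\frac{\psi(x_{a_t}-x_{b_t})}{2p_{a_t}(t)}\big)$ and $w_{b_t}(t+1)=w_{b_t}(t)\exp\!\big(-\frac{\gamma}{K}\frac{\psi(x_{a_t}-x_{b_t})}{2p_{b_t}(t)}\big)$;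 other weights unchanged. Notation: $\mathbb{G}_{max}=\max_i\sum_{t=1}^T x_i(t)$ (best single-arm gain); $\mathbb{G}_{alg}=\frac12\sum_{t=1}^T\big(x_{a_t}(t)+x_{b_t}(t)\big)$ (gain of the algorithm); $\mathbb{E}\mathbb{G}_{unif}=\frac1K\sum_{t=1}^T\sum_{i=1}^K x_i(t)$. Expectations are over the algorithm's internal randomization. *)

theory Defs
  imports "HOL-Probability.Probability_Mass_Function"
begin

text \<open>Arms are 0..K-1; rounds are 1..T; x t i is the reward of arm i in round t.
  The transfer function psi is the identity.\<close>

definition rex3_prob :: "nat \<Rightarrow> real \<Rightarrow> (nat \<Rightarrow> real) \<Rightarrow> nat \<Rightarrow> real" where
  "rex3_prob K \<gamma> w i = (1 - \<gamma>) * w i / (\<Sum>j<K. w j) + \<gamma> / real K"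

definition rex3_draw :: "nat \<Rightarrow> real \<Rightarrow> (nat \<Rightarrow> real) \<Rightarrow> nat pmf" where
  "rex3_draw K \<gamma> w = embed_pmf (\<lambda>i. if i < K then rex3_prob K \<gamma> w i else 0)"

definition rex3_pairs :: "nat \<Rightarrow> real \<Rightarrow> (nat \<Rightarrow> real) \<Rightarrow> (nat \<times> nat) pmf" where
  "rex3_pairs K \<gamma> w = pair_pmf (rex3_draw K \<gamma> w) (rex3_draw K \<gamma> w)"

definition rex3_update :: "nat \<Rightarrow> real \<Rightarrow> (nat \<Rightarrow> real) \<Rightarrow> (nat \<Rightarrow> real) \<Rightarrow> nat \<times> nat \<Rightarrow> (nat \<Rightarrow> real)" where
  "rex3_update K \<gamma> xt w ab = (case ab of (a, b) \<Rightarrow>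
     if a = b then w
     else w(a := w a * exp (\<gamma> / real K * (xt a - xt b) / (2 * rex3_prob K \<gamma> w a)),
            b := w b * exp (- (\<gamma> / real K * (xt a - xt b) / (2 * rex3_prob K \<gamma> w b)))))"

text \<open>rex3_weights K gamma x n = distribution of the weight vector after n rounds
  (i.e. w(n+1)).\<close>
primrec rex3_weights :: "nat \<Rightarrow> real \<Rightarrow> (nat \<Rightarrow> nat \<Rightarrow> real) \<Rightarrow> nat \<Rightarrow> (nat \<Rightarrow> real) pmf" where
  "rex3_weights K \<gamma> x 0 = return_pmf (\<lambda>_. 1)"
| "rex3_weights K \<gamma> x (Suc n) =
     rex3_weights K \<gamma> x n \<bind>
       (\<lambda>w. map_pmf (rex3_update K \<gamma> (x (Suc n)) w) (rex3_pairs K \<gamma> w))"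

definition rex3_choice :: "nat \<Rightarrow> real \<Rightarrow> (nat \<Rightarrow> nat \<Rightarrow> real) \<Rightarrow> nat \<Rightarrow> (nat \<times> nat) pmf" where
  "rex3_choice K \<gamma> x t = rex3_weights K \<gamma> x (t - 1) \<bind> rex3_pairs K \<gamma>"

definition rex3_expected_gain :: "nat \<Rightarrow> real \<Rightarrow> nat \<Rightarrow> (nat \<Rightarrow> nat \<Rightarrow> real) \<Rightarrow> real" where
  "rex3_expected_gain K \<gamma> T x =
     (\<Sum>t\<in>{1..T}. measure_pmf.expectation (rex3_choice K \<gamma> x t)
                     (\<lambda>(a, b). (x t a + x t b) / 2))"

definition G_max :: "nat \<Rightarrow> nat \<Rightarrow> (nat \<Rightarrow> nat \<Rightarrow> real) \<Rightarrow> real" where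
  "G_max K T x = Max ((\<lambda>i. \<Sum>t\<in>{1..T}. x t i) ` {..<K})"

definition EG_unif :: "nat \<Rightarrow> nat \<Rightarrow> (nat \<Rightarrow> nat \<Rightarrow> real) \<Rightarrow> real" where
  "EG_unif K T x = (1 / real K) * (\<Sum>t\<in>{1..T}. \<Sum>i<K. x t i)"

end

theory Submission
  imports Defs
begin

(* For a comparison arm j and weights w with total W let
     Phi_j(w) = (c ln W - (c - 1) (ln K + (1/K) sum_i ln w_i) - ln w_j) / eta,
   where eta = gamma/K and c = (1 - gamma)(1 + 2 gamma). By concavity of ln, Phi_j >= 0, and
   initially Phi_j = (K/gamma) ln K. A round multiplies each w_i by exp(eta g_i), where g is the
   importance-weighted estimate of x - X and X is the expected reward of a single draw.
   Bounding ln(W'/W) by the second-order expansion of exp (|eta g_i| <= 1/2 because every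
   p_i >= eta), and using E g_i = x_i - X and E g_i^2 <= (x_i + X)/(2 p_i), one round decreases
   the expectation of Phi_j by at least x_j - X + 2 gamma (U - X) - (e - 2) gamma (U + X), with U
   the uniform average reward. Summing over the rounds and using Phi_j >= 0 at the end gives
   the bound. *)

lemma exp_le_one_plus_quadratic:
  fixes y :: real
  assumes "\<bar>y\<bar> \<le> 1/2"
  shows "exp y \<le> 1 + y + 2/3 * y\<^sup>2"
proof -
  obtain t where t: "\<bar>t\<bar> \<le> \<bar>y\<bar>"
    and taylor: "exp y = (\<Sum>m<3. y ^ m / fact m) + exp t / fact 3 * y ^ 3"
    using Maclaurin_exp_le[of y 3] by blast
  have "exp t \<le> exp (1/2)" using t assms by simp
  also have "\<dots> \<le> 2" by (rule exp_half_le2)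
  finally have "exp t \<le> 2" .
  have "exp t / 6 * y ^ 3 \<le> exp t / 6 * \<bar>y\<bar> ^ 3"
    by (intro mult_left_mono) (auto simp: power_abs[symmetric])
  also have "\<dots> \<le> 2 / 6 * \<bar>y\<bar> ^ 3" using \<open>exp t \<le> 2\<close> by (intro mult_right_mono) auto
  also have "\<bar>y\<bar> ^ 3 = \<bar>y\<bar> * y\<^sup>2" by (simp add: power2_eq_square power3_eq_cube abs_mult)
  also have "\<bar>y\<bar> * y\<^sup>2 \<le> 1/2 * y\<^sup>2" using assms by (intro mult_right_mono) auto
  finally have "exp t / fact 3 * y ^ 3 \<le> 1/6 * y\<^sup>2" by (simp add: fact_numeral)
  moreover have "(\<Sum>m<3. y ^ m / fact m) = 1 + y + y\<^sup>2 / 2" by (simp add: eval_nat_numeral)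
  ultimately show ?thesis using taylor by linarith
qed

lemma exp_one_ge_8_div_3: "8/3 \<le> exp (1::real)"
proof -
  obtain t where "exp (1::real) = (\<Sum>m<4. 1 ^ m / fact m) + exp t / fact 4 * 1 ^ 4"
    using Maclaurin_exp_le[of 1 4] by blast
  moreover have "(\<Sum>m<4. (1::real) ^ m / fact m) = 8/3" by (simp add: eval_nat_numeral)
  moreover have "0 \<le> exp t / fact 4 * (1::real) ^ 4" by simp
  ultimately show ?thesis by linarith
qed

lemma square_diff_le_add:
  fixes u v :: real
  assumes "0 \<le> u" "u \<le> 1" "0 \<le> v" "v \<le> 1"
  shows "(u - v)\<^sup>2 \<le> u + v"
proof -
  have "u * u \<le> u" "v * v \<le> v" "0 \<le> u * v" using assms by (auto simp: mult_left_le_one_le)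
  then show ?thesis by (simp add: power2_eq_square algebra_simps)
qed

lemma ln_sum_exp_weighted_le:
  fixes w s :: "'a \<Rightarrow> real"
  assumes "finite A" "A \<noteq> {}" "\<And>i. i \<in> A \<Longrightarrow> 0 < w i"
  shows "ln (\<Sum>i\<in>A. w i * exp (s i))
         \<le> ln (\<Sum>i\<in>A. w i) + (\<Sum>i\<in>A. w i / (\<Sum>k\<in>A. w k) * (exp (s i) - 1))"
proof -
  let ?W = "\<Sum>k\<in>A. w k"
  have W: "0 < ?W" using assms by (intro sum_pos)
  have W': "0 < (\<Sum>i\<in>A. w i * exp (s i))" using assms by (intro sum_pos) auto
  have "ln (\<Sum>i\<in>A. w i * exp (s i)) - ln ?W = ln ((\<Sum>i\<in>A. w i * exp (s i)) / ?W)"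
    using W W' by (simp add: ln_div)
  also have "\<dots> \<le> (\<Sum>i\<in>A. w i * exp (s i)) / ?W - 1" using W W' by (intro ln_le_minus_one) simp
  also have "\<dots> = (\<Sum>i\<in>A. w i / ?W * (exp (s i) - 1))"
    using W by (simp add: sum_divide_distrib[symmetric] right_diff_distrib sum_subtractf field_simps)
  finally show ?thesis by simp
qed

lemma sum_ln_le_card_mult_ln_mean:
  fixes w :: "'a \<Rightarrow> real"
  assumes "finite A" "A \<noteq> {}" "\<And>i. i \<in> A \<Longrightarrow> 0 < w i"
  shows "(\<Sum>i\<in>A. ln (w i)) \<le> card A * ln ((\<Sum>i\<in>A. w i) / card A)"
proof -
  define m where "m = (\<Sum>i\<in>A. w i) / card A"
  have "0 < (\<Sum>i\<in>A. w i)" using assms by (intro sum_pos)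
  moreover have "0 < card A" using assms by (simp add: card_gt_0_iff)
  ultimately have m: "0 < m" by (simp add: m_def)
  have "(\<Sum>i\<in>A. ln (w i)) \<le> (\<Sum>i\<in>A. w i / m - 1 + ln m)"
  proof (intro sum_mono)
    fix i assume "i \<in> A"
    then have "0 < w i" using assms by blast
    then show "ln (w i) \<le> w i / m - 1 + ln m"
      using ln_le_minus_one[of "w i / m"] m by (simp add: ln_div)
  qed
  also have "\<dots> = card A * ln m"
    using \<open>0 < card A\<close> \<open>0 < (\<Sum>i\<in>A. w i)\<close>
    by (simp add: sum.distrib sum_subtractf sum_divide_distrib[symmetric] sum_distrib_right[symmetric] m_def)
  finally show ?thesis by (simp add: m_def)
qed

lemma expectation_pmf_finite:
  fixes f :: "'a \<Rightarrow> real"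
  assumes "finite (set_pmf M)"
  shows "measure_pmf.expectation M f = (\<Sum>x\<in>set_pmf M. f x * pmf M x)"
  using assms by (intro integral_measure_pmf_real) auto

lemma expectation_bind_pmf_finite:
  fixes f :: "'b \<Rightarrow> real"
  assumes fin: "finite (set_pmf M)" and finN: "\<And>y. y \<in> set_pmf M \<Longrightarrow> finite (set_pmf (N y))"
  shows "measure_pmf.expectation (bind_pmf M N) f
       = measure_pmf.expectation M (\<lambda>y. measure_pmf.expectation (N y) f)"
proof -
  let ?S = "set_pmf (bind_pmf M N)"
  have finS: "finite ?S" using fin finN by simp
  have inner: "measure_pmf.expectation (N y) f = (\<Sum>z\<in>?S. f z * pmf (N y) z)"
    if "y \<in> set_pmf M" for y
    using that finS by (intro integral_measure_pmf_real) auto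
  have "measure_pmf.expectation (bind_pmf M N) f
      = (\<Sum>z\<in>?S. \<Sum>y\<in>set_pmf M. f z * pmf (N y) z * pmf M y)"
    by (simp add: expectation_pmf_finite[OF finS] pmf_bind expectation_pmf_finite[OF fin]
        sum_distrib_left mult.assoc)
  also have "\<dots> = (\<Sum>y\<in>set_pmf M. (\<Sum>z\<in>?S. f z * pmf (N y) z) * pmf M y)"
    by (subst sum.swap) (simp add: sum_distrib_right)
  also have "\<dots> = measure_pmf.expectation M (\<lambda>y. measure_pmf.expectation (N y) f)"
    by (simp add: expectation_pmf_finite[OF fin] inner)
  finally show ?thesis .
qed

locale rex3 =
  fixes K :: nat and \<gamma> :: real
  assumes K_ge_2: "K \<ge> 2" and gamma_pos: "0 < \<gamma>" and gamma_less_half: "\<gamma> < 1/2"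
begin

abbreviation p :: "(nat \<Rightarrow> real) \<Rightarrow> nat \<Rightarrow> real" where
  "p w i \<equiv> rex3_prob K \<gamma> w i"

definition eta :: real where "eta = \<gamma> / real K"

definition positive_weights :: "(nat \<Rightarrow> real) \<Rightarrow> bool" where
  "positive_weights w \<longleftrightarrow> (\<forall>i<K. 0 < w i)"

definition normalized_weight :: "(nat \<Rightarrow> real) \<Rightarrow> nat \<Rightarrow> real" where
  "normalized_weight w i = w i / (\<Sum>k<K. w k)"

lemma K_pos: "0 < real K"
  using K_ge_2 by simp

lemma eta_pos: "0 < eta"
  using gamma_pos K_pos by (simp add: eta_def)

lemma sum_weights_pos: "positive_weights w \<Longrightarrow> 0 < (\<Sum>i<K. w i)"
  using K_ge_2 by (intro sum_pos) (auto simp: positive_weights_def lessThan_empty_iff)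

lemma p_eq: "p w i = (1 - \<gamma>) * normalized_weight w i + eta"
  by (simp add: rex3_prob_def normalized_weight_def eta_def)

lemma normalized_weight_nonneg:
  "positive_weights w \<Longrightarrow> i < K \<Longrightarrow> 0 \<le> normalized_weight w i"
  using sum_weights_pos[of w] by (auto simp: normalized_weight_def positive_weights_def less_imp_le)

lemma eta_le_p: "positive_weights w \<Longrightarrow> i < K \<Longrightarrow> eta \<le> p w i"
  using normalized_weight_nonneg[of w i] gamma_less_half by (simp add: p_eq)

lemma p_pos: "positive_weights w \<Longrightarrow> i < K \<Longrightarrow> 0 < p w i"
  using eta_le_p eta_pos by fastforce

lemma normalized_weight_le: "normalized_weight w i \<le> p w i / (1 - \<gamma>)"
  using eta_pos gamma_less_half by (simp add: p_eq field_simps)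

lemma sum_normalized_weight: "positive_weights w \<Longrightarrow> (\<Sum>i<K. normalized_weight w i) = 1"
  using sum_weights_pos[of w] by (simp add: normalized_weight_def sum_divide_distrib[symmetric])

lemma sum_p: "positive_weights w \<Longrightarrow> (\<Sum>i<K. p w i) = 1"
  using sum_normalized_weight[of w] K_pos
  by (simp add: p_eq sum.distrib sum_distrib_left[symmetric] eta_def)

text \<open>For a = b both branches coincide and cancel, matching the unchanged weights of such a round.\<close>

definition gain_estimate :: "(nat \<Rightarrow> real) \<Rightarrow> (nat \<Rightarrow> real) \<Rightarrow> nat \<Rightarrow> nat \<Rightarrow> nat \<Rightarrow> real" where
  "gain_estimate xt w a b i =
     (if i = a then (xt a - xt b) / (2 * p w a) else 0)
   - (if i = b then (xt a - xt b) / (2 * p w b) else 0)"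

lemma rex3_update_eq:
  "rex3_update K \<gamma> xt w (a, b) = (\<lambda>i. w i * exp (eta * gain_estimate xt w a b i))"
  by (auto simp: rex3_update_def gain_estimate_def eta_def)

lemma positive_weights_update:
  "positive_weights w \<Longrightarrow> positive_weights (rex3_update K \<gamma> xt w (a, b))"
  by (simp add: rex3_update_eq positive_weights_def)

lemma abs_eta_gain_estimate_le:
  assumes w: "positive_weights w" and "a < K" "b < K"
    and xt: "\<And>i. i < K \<Longrightarrow> 0 \<le> xt i \<and> xt i \<le> 1"
  shows "\<bar>eta * gain_estimate xt w a b i\<bar> \<le> 1/2"
proof -
  have d: "\<bar>xt a - xt b\<bar> \<le> 1" using xt[OF \<open>a < K\<close>] xt[OF \<open>b < K\<close>] by (simp add: abs_le_iff)
  have half: "\<bar>eta * ((xt a - xt b) / (2 * p w k))\<bar> \<le> 1/2" if "k < K" for k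
  proof -
    have pk: "0 < p w k" using p_pos[OF w that] .
    have "\<bar>eta * ((xt a - xt b) / (2 * p w k))\<bar> = eta * \<bar>xt a - xt b\<bar> / (2 * p w k)"
      using pk eta_pos by (simp add: abs_mult abs_divide)
    also have "\<dots> \<le> p w k * 1 / (2 * p w k)"
      using d eta_le_p[OF w that] eta_pos pk by (intro divide_right_mono mult_mono) auto
    finally show ?thesis using pk by simp
  qed
  show ?thesis
    using half[OF \<open>a < K\<close>] half[OF \<open>b < K\<close>]
    by (cases "i = a"; cases "i = b") (auto simp: gain_estimate_def)
qed

definition c :: real where "c = (1 - \<gamma>) * (1 + 2 * \<gamma>)"

lemma c_ge_1: "1 \<le> c"
  using gamma_pos gamma_less_half by (simp add: c_def algebra_simps)

definition potential :: "nat \<Rightarrow> (nat \<Rightarrow> real) \<Rightarrow> real" where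
  "potential j w =
     (c * ln (\<Sum>i<K. w i) - (c - 1) * (ln (real K) + (\<Sum>i<K. ln (w i)) / real K) - ln (w j)) / eta"

lemma potential_update_le:
  assumes w: "positive_weights w" and j: "j < K" and ab: "a < K" "b < K"
    and xt: "\<And>i. i < K \<Longrightarrow> 0 \<le> xt i \<and> xt i \<le> 1"
  defines "e \<equiv> gain_estimate xt w a b"
  shows "potential j (rex3_update K \<gamma> xt w (a, b))
         \<le> potential j w + c * (\<Sum>i<K. normalized_weight w i * e i)
            + 2/3 * c * eta * (\<Sum>i<K. normalized_weight w i * (e i)\<^sup>2)
            - (c - 1) / real K * (\<Sum>i<K. e i) - e j"
proof -
  define q where "q = normalized_weight w"
  define S where "S = (\<Sum>i<K. q i * e i) + 2/3 * eta * (\<Sum>i<K. q i * (e i)\<^sup>2)"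
  have w_pos: "\<And>i. i < K \<Longrightarrow> 0 < w i" using w by (simp add: positive_weights_def)
  have ln_sum: "ln (\<Sum>i<K. w i * exp (eta * e i)) \<le> ln (\<Sum>i<K. w i) + (\<Sum>i<K. q i * (exp (eta * e i) - 1))"
    using ln_sum_exp_weighted_le[of "{..<K}" w] K_ge_2 w_pos
    by (simp add: q_def normalized_weight_def lessThan_empty_iff)
  have "(\<Sum>i<K. q i * (exp (eta * e i) - 1)) \<le> (\<Sum>i<K. q i * (eta * e i + 2/3 * (eta * e i)\<^sup>2))"
  proof (intro sum_mono mult_left_mono)
    fix i assume "i \<in> {..<K}"
    then show "0 \<le> q i" by (simp add: q_def normalized_weight_nonneg[OF w])
    have "\<bar>eta * e i\<bar> \<le> 1/2" unfolding e_def by (rule abs_eta_gain_estimate_le[OF w ab xt])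
    then show "exp (eta * e i) - 1 \<le> eta * e i + 2/3 * (eta * e i)\<^sup>2"
      using exp_le_one_plus_quadratic by fastforce
  qed
  also have "(\<Sum>i<K. q i * (eta * e i + 2/3 * (eta * e i)\<^sup>2)) = eta * S"
    by (simp add: S_def sum.distrib sum_distrib_left power_mult_distrib algebra_simps power2_eq_square)
  finally have lnW: "ln (\<Sum>i<K. w i * exp (eta * e i)) \<le> ln (\<Sum>i<K. w i) + eta * S"
    using ln_sum by linarith
  have "(\<Sum>i<K. ln (w i * exp (eta * e i))) = (\<Sum>i<K. ln (w i) + eta * e i)"
    using w_pos by (intro sum.cong) (simp_all add: ln_mult_pos)
  then have "(\<Sum>i<K. ln (w i * exp (eta * e i))) = (\<Sum>i<K. ln (w i)) + eta * (\<Sum>i<K. e i)"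
    by (simp add: sum.distrib sum_distrib_left)
  moreover have "ln (w j * exp (eta * e j)) = ln (w j) + eta * e j"
    using w_pos[OF j] by (simp add: ln_mult_pos)
  ultimately have "potential j (rex3_update K \<gamma> xt w (a, b))
      \<le> (c * (ln (\<Sum>i<K. w i) + eta * S)
          - (c - 1) * (ln (real K) + ((\<Sum>i<K. ln (w i)) + eta * (\<Sum>i<K. e i)) / real K)
          - (ln (w j) + eta * e j)) / eta"
    unfolding potential_def rex3_update_eq e_def[symmetric]
    using lnW c_ge_1 eta_pos by (intro divide_right_mono) auto
  also have "\<dots> = potential j w + c * S - (c - 1) / real K * (\<Sum>i<K. e i) - e j"
    using eta_pos K_pos by (simp add: potential_def field_simps)
  finally show ?thesis by (simp add: S_def q_def algebra_simps)
qed

definition pair_expectation :: "(nat \<Rightarrow> real) \<Rightarrow> (nat \<Rightarrow> nat \<Rightarrow> real) \<Rightarrow> real" where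
  "pair_expectation w h = (\<Sum>a<K. \<Sum>b<K. p w a * p w b * h a b)"

lemma pair_expectation_add:
  "pair_expectation w (\<lambda>a b. f a b + h a b) = pair_expectation w f + pair_expectation w h"
  by (simp add: pair_expectation_def distrib_left sum.distrib)

lemma pair_expectation_diff:
  "pair_expectation w (\<lambda>a b. f a b - h a b) = pair_expectation w f - pair_expectation w h"
  by (simp add: pair_expectation_def right_diff_distrib sum_subtractf)

lemma pair_expectation_scale:
  "pair_expectation w (\<lambda>a b. r * f a b) = r * pair_expectation w f"
  by (simp add: pair_expectation_def sum_distrib_left ac_simps)

lemma pair_expectation_sum:
  "pair_expectation w (\<lambda>a b. \<Sum>i\<in>A. f i a b) = (\<Sum>i\<in>A. pair_expectation w (f i))"
  unfolding pair_expectation_def sum_distrib_left by (subst sum.swap, subst (2) sum.swap) simp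

lemma pair_expectation_const:
  "positive_weights w \<Longrightarrow> pair_expectation w (\<lambda>a b. r) = r"
  by (simp add: pair_expectation_def sum_distrib_right[symmetric] sum_distrib_left[symmetric] sum_p)

lemma pair_expectation_mono:
  assumes w: "positive_weights w" and "\<And>a b. a < K \<Longrightarrow> b < K \<Longrightarrow> f a b \<le> h a b"
  shows "pair_expectation w f \<le> pair_expectation w h"
  unfolding pair_expectation_def
  using assms p_pos[OF w] by (intro sum_mono mult_left_mono) (auto intro: less_imp_le)

lemma pair_expectation_if_fst:
  assumes "i < K"
  shows "pair_expectation w (\<lambda>a b. if a = i then f b else 0) = p w i * (\<Sum>b<K. p w b * f b)"
proof -
  have "pair_expectation w (\<lambda>a b. if a = i then f b else 0)
      = (\<Sum>a<K. if a = i then (\<Sum>b<K. p w a * p w b * f b) else 0)"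
    unfolding pair_expectation_def by (intro sum.cong) auto
  then show ?thesis using assms by (simp add: sum_distrib_left ac_simps)
qed

lemma pair_expectation_if_snd:
  assumes "i < K"
  shows "pair_expectation w (\<lambda>a b. if b = i then f a else 0) = p w i * (\<Sum>a<K. p w a * f a)"
proof -
  have "pair_expectation w (\<lambda>a b. if b = i then f a else 0) = (\<Sum>a<K. p w i * (p w a * f a))"
    unfolding pair_expectation_def using assms by (intro sum.cong) (auto simp: if_distrib cong: if_cong)
  then show ?thesis by (simp add: sum_distrib_left)
qed

lemma pair_expectation_fst:
  "positive_weights w \<Longrightarrow> pair_expectation w (\<lambda>a b. f a) = (\<Sum>a<K. p w a * f a)"
  by (simp add: pair_expectation_def sum_distrib_left[symmetric] sum_distrib_right[symmetric]
      sum_p ac_simps)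

lemma pair_expectation_snd:
  "positive_weights w \<Longrightarrow> pair_expectation w (\<lambda>a b. f b) = (\<Sum>b<K. p w b * f b)"
  unfolding pair_expectation_def
  by (subst sum.swap) (simp add: sum_distrib_left[symmetric] sum_distrib_right[symmetric]
      sum_p ac_simps)

definition mean_reward :: "(nat \<Rightarrow> real) \<Rightarrow> (nat \<Rightarrow> real) \<Rightarrow> real" where
  "mean_reward w xt = (\<Sum>i<K. p w i * xt i)"

lemma pair_expectation_avg_reward:
  "positive_weights w \<Longrightarrow> pair_expectation w (\<lambda>a b. (xt a + xt b) / 2) = mean_reward w xt"
  using pair_expectation_add[of w "\<lambda>a b. xt a / 2" "\<lambda>a b. xt b / 2"]
  by (simp add: add_divide_distrib pair_expectation_fst pair_expectation_snd mean_reward_def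
      sum_divide_distrib[symmetric])

lemma gain_estimate_eq:
  "gain_estimate xt w a b i =
     (if a = i then (xt i - xt b) / (2 * p w i) else 0) - (if b = i then (xt a - xt i) / (2 * p w i) else 0)"
  by (auto simp: gain_estimate_def)

lemma gain_estimate_squared:
  "(gain_estimate xt w a b i)\<^sup>2 =
     (if a = i then ((xt i - xt b) / (2 * p w i))\<^sup>2 else 0)
   + (if b = i then ((xt i - xt a) / (2 * p w i))\<^sup>2 else 0)"
  by (auto simp: gain_estimate_eq power_divide power2_commute)

lemma expectation_gain_estimate:
  assumes w: "positive_weights w" and i: "i < K"
  shows "pair_expectation w (\<lambda>a b. gain_estimate xt w a b i) = xt i - mean_reward w xt"
proof -
  have pi: "p w i \<noteq> 0" using p_pos[OF w i] by simp
  have fst: "p w i * (\<Sum>b<K. p w b * ((xt i - xt b) / (2 * p w i))) = (\<Sum>b<K. p w b * (xt i - xt b)) / 2"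
    unfolding sum_distrib_left sum_divide_distrib using pi by (intro sum.cong) (simp_all add: field_simps)
  have snd: "p w i * (\<Sum>a<K. p w a * ((xt a - xt i) / (2 * p w i))) = - ((\<Sum>a<K. p w a * (xt i - xt a)) / 2)"
    unfolding sum_distrib_left sum_divide_distrib sum_negf[symmetric] using pi
    by (intro sum.cong) (simp_all add: field_simps)
  have "pair_expectation w (\<lambda>a b. gain_estimate xt w a b i) = (\<Sum>b<K. p w b * (xt i - xt b))"
    unfolding gain_estimate_eq pair_expectation_diff pair_expectation_if_fst[OF i]
      pair_expectation_if_snd[OF i] fst snd by simp
  also have "(\<Sum>b<K. p w b * (xt i - xt b)) = xt i - mean_reward w xt"
    using sum_p[OF w] by (simp add: right_diff_distrib sum_subtractf sum_distrib_right[symmetric]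
        mean_reward_def)
  finally show ?thesis by simp
qed

lemma weighted_squared_deviation_le:
  assumes w: "positive_weights w" and i: "i < K"
    and xt: "\<And>i. i < K \<Longrightarrow> 0 \<le> xt i \<and> xt i \<le> 1"
  shows "(\<Sum>b<K. p w b * (xt i - xt b)\<^sup>2) \<le> xt i + mean_reward w xt"
proof -
  have "(\<Sum>b<K. p w b * (xt i - xt b)\<^sup>2) \<le> (\<Sum>b<K. p w b * (xt i + xt b))"
    using xt i p_pos[OF w] by (intro sum_mono mult_left_mono square_diff_le_add) (auto intro: less_imp_le)
  also have "\<dots> = xt i + mean_reward w xt"
    using sum_p[OF w] by (simp add: distrib_left sum.distrib sum_distrib_right[symmetric] mean_reward_def)
  finally show ?thesis .
qed

lemma expectation_gain_estimate_squared_le: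
  assumes w: "positive_weights w" and i: "i < K"
    and xt: "\<And>i. i < K \<Longrightarrow> 0 \<le> xt i \<and> xt i \<le> 1"
  shows "pair_expectation w (\<lambda>a b. (gain_estimate xt w a b i)\<^sup>2) \<le> (xt i + mean_reward w xt) / (2 * p w i)"
proof -
  have pi: "0 < p w i" using p_pos[OF w i] .
  have half: "p w i * (\<Sum>b<K. p w b * ((xt i - xt b) / (2 * p w i))\<^sup>2)
      = (\<Sum>b<K. p w b * (xt i - xt b)\<^sup>2) / (4 * p w i)"
    unfolding sum_distrib_left sum_divide_distrib using pi
    by (intro sum.cong) (simp_all add: power_divide field_simps power2_eq_square)
  have "pair_expectation w (\<lambda>a b. (gain_estimate xt w a b i)\<^sup>2)
      = (\<Sum>b<K. p w b * (xt i - xt b)\<^sup>2) / (2 * p w i)"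
    unfolding gain_estimate_squared pair_expectation_add pair_expectation_if_fst[OF i]
      pair_expectation_if_snd[OF i] half
    using pi by (simp add: field_simps)
  also have "\<dots> \<le> (xt i + mean_reward w xt) / (2 * p w i)"
    using weighted_squared_deviation_le[OF w i xt] pi by (intro divide_right_mono) auto
  finally show ?thesis .
qed

lemma normalized_weight_deviation:
  assumes w: "positive_weights w"
  shows "(\<Sum>i<K. normalized_weight w i * (xt i - mean_reward w xt))
         = \<gamma> / (1 - \<gamma>) * (mean_reward w xt - (\<Sum>i<K. xt i) / real K)"
proof -
  have q: "normalized_weight w i = (p w i - eta) / (1 - \<gamma>)" for i
    using gamma_less_half by (simp add: p_eq)
  have "(\<Sum>i<K. (p w i - eta) * (xt i - mean_reward w xt))
      = (\<Sum>i<K. p w i * xt i) - (\<Sum>i<K. p w i) * mean_reward w xt - eta * (\<Sum>i<K. xt i)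
        + real K * eta * mean_reward w xt"
    by (simp add: algebra_simps sum.distrib sum_subtractf sum_distrib_left sum_distrib_right)
  also have "\<dots> = \<gamma> * (mean_reward w xt - (\<Sum>i<K. xt i) / real K)"
    unfolding mean_reward_def using sum_p[OF w] K_pos by (simp add: eta_def field_simps)
  finally show ?thesis
    by (simp add: q sum_divide_distrib[symmetric])
qed

lemma expected_potential_update_le_moments:
  assumes w: "positive_weights w" and j: "j < K"
    and xt: "\<And>i. i < K \<Longrightarrow> 0 \<le> xt i \<and> xt i \<le> 1"
  defines "X \<equiv> mean_reward w xt" and "q \<equiv> normalized_weight w"
  shows "pair_expectation w (\<lambda>a b. potential j (rex3_update K \<gamma> xt w (a, b)))
         \<le> potential j w + c * (\<Sum>i<K. q i * (xt i - X))
            + 2/3 * c * eta * (\<Sum>i<K. q i * pair_expectation w (\<lambda>a b. (gain_estimate xt w a b i)\<^sup>2))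
            - (c - 1) / real K * (\<Sum>i<K. xt i - X) - (xt j - X)"
proof -
  define e where "e = gain_estimate xt w"
  have Ee: "\<And>i. i < K \<Longrightarrow> pair_expectation w (\<lambda>a b. e a b i) = xt i - X"
    unfolding e_def X_def by (rule expectation_gain_estimate[OF w])
  have sum_Ee: "(\<Sum>i<K. f i * pair_expectation w (\<lambda>a b. e a b i)) = (\<Sum>i<K. f i * (xt i - X))" for f
    by (intro sum.cong) (simp_all add: Ee)
  have "pair_expectation w (\<lambda>a b. potential j (rex3_update K \<gamma> xt w (a, b)))
      \<le> pair_expectation w (\<lambda>a b. potential j w + c * (\<Sum>i<K. q i * e a b i)
            + 2/3 * c * eta * (\<Sum>i<K. q i * (e a b i)\<^sup>2)
            - (c - 1) / real K * (\<Sum>i<K. e a b i) - e a b j)"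
    unfolding e_def q_def using potential_update_le[OF w j _ _ xt]
    by (intro pair_expectation_mono[OF w])
  also have "\<dots> = potential j w + c * (\<Sum>i<K. q i * (xt i - X))
            + 2/3 * c * eta * (\<Sum>i<K. q i * pair_expectation w (\<lambda>a b. (e a b i)\<^sup>2))
            - (c - 1) / real K * (\<Sum>i<K. xt i - X) - (xt j - X)"
    by (simp only: pair_expectation_add pair_expectation_diff pair_expectation_scale
        pair_expectation_sum pair_expectation_const[OF w])
      (simp add: Ee j sum_Ee sum_Ee[of "\<lambda>_. 1", simplified])
  finally show ?thesis unfolding e_def .
qed

lemma weighted_second_moment_le:
  assumes w: "positive_weights w" and xt: "\<And>i. i < K \<Longrightarrow> 0 \<le> xt i \<and> xt i \<le> 1"
  shows "(\<Sum>i<K. normalized_weight w i * pair_expectation w (\<lambda>a b. (gain_estimate xt w a b i)\<^sup>2))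
         \<le> real K * ((\<Sum>i<K. xt i) / real K + mean_reward w xt) / (2 * (1 - \<gamma>))"
proof -
  let ?X = "mean_reward w xt"
  have "(\<Sum>i<K. normalized_weight w i * pair_expectation w (\<lambda>a b. (gain_estimate xt w a b i)\<^sup>2))
      \<le> (\<Sum>i<K. p w i / (1 - \<gamma>) * ((xt i + ?X) / (2 * p w i)))"
  proof (intro sum_mono mult_mono)
    fix i assume "i \<in> {..<K}"
    then have i: "i < K" by simp
    show "normalized_weight w i \<le> p w i / (1 - \<gamma>)" by (rule normalized_weight_le)
    show "pair_expectation w (\<lambda>a b. (gain_estimate xt w a b i)\<^sup>2) \<le> (xt i + ?X) / (2 * p w i)"
      by (rule expectation_gain_estimate_squared_le[OF w i xt])
    show "0 \<le> p w i / (1 - \<gamma>)" using p_pos[OF w i] gamma_less_half by simp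
    show "0 \<le> pair_expectation w (\<lambda>a b. (gain_estimate xt w a b i)\<^sup>2)"
      using pair_expectation_mono[OF w, of "\<lambda>a b. 0"] pair_expectation_const[OF w, of 0] by simp
  qed
  also have "\<dots> = (\<Sum>i<K. (xt i + ?X) / (2 * (1 - \<gamma>)))"
    using p_pos[OF w] by (intro sum.cong) (auto simp: less_imp_neq[symmetric])
  also have "\<dots> = real K * ((\<Sum>i<K. xt i) / real K + ?X) / (2 * (1 - \<gamma>))"
    using K_pos gamma_less_half by (simp add: sum.distrib sum_divide_distrib[symmetric] field_simps)
  finally show ?thesis .
qed

lemma potential_drop_coefficients_le:
  assumes "0 \<le> U + X"
  shows "(1 + 2 * \<gamma>) * \<gamma> * (X - U) + (1 + 2 * \<gamma>) * \<gamma> * (U + X) / 3 - \<gamma> * (1 - 2 * \<gamma>) * (U - X)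
         \<le> - (2 * \<gamma> * (U - X) - (exp 1 - 2) * \<gamma> * (U + X))"
proof -
  have "(1 + 2 * \<gamma>) / 3 \<le> exp 1 - 2"
    using exp_one_ge_8_div_3 gamma_less_half by simp
  then have "(1 + 2 * \<gamma>) / 3 * (\<gamma> * (U + X)) \<le> (exp 1 - 2) * (\<gamma> * (U + X))"
    using assms gamma_pos by (intro mult_right_mono) auto
  moreover have "(1 + 2 * \<gamma>) * \<gamma> * (X - U) + (1 + 2 * \<gamma>) * \<gamma> * (U + X) / 3 - \<gamma> * (1 - 2 * \<gamma>) * (U - X)
      = - (2 * \<gamma> * (U - X)) + (1 + 2 * \<gamma>) / 3 * (\<gamma> * (U + X))"
    by (simp add: field_simps)
  ultimately show ?thesis by linarith
qed

definition potential_drop :: "(nat \<Rightarrow> real) \<Rightarrow> (nat \<Rightarrow> real) \<Rightarrow> nat \<Rightarrow> real" where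
  "potential_drop xt w j =
     (let X = mean_reward w xt; U = (\<Sum>i<K. xt i) / real K
      in (xt j - X) + 2 * \<gamma> * (U - X) - (exp 1 - 2) * \<gamma> * (U + X))"

lemma expected_potential_update_le:
  assumes w: "positive_weights w" and j: "j < K"
    and xt: "\<And>i. i < K \<Longrightarrow> 0 \<le> xt i \<and> xt i \<le> 1"
  shows "pair_expectation w (\<lambda>a b. potential j (rex3_update K \<gamma> xt w (a, b)))
         \<le> potential j w - potential_drop xt w j"
proof -
  define X where "X = mean_reward w xt"
  define U where "U = (\<Sum>i<K. xt i) / real K"
  have "0 \<le> U + X"
    using xt K_pos p_pos[OF w] unfolding U_def X_def mean_reward_def
    by (intro add_nonneg_nonneg divide_nonneg_pos sum_nonneg mult_nonneg_nonneg) (auto intro: less_imp_le)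
  have "2/3 * c * eta * (\<Sum>i<K. normalized_weight w i * pair_expectation w (\<lambda>a b. (gain_estimate xt w a b i)\<^sup>2))
      \<le> 2/3 * c * eta * (real K * (U + X) / (2 * (1 - \<gamma>)))"
    using weighted_second_moment_le[OF w xt] c_ge_1 eta_pos
    unfolding U_def X_def by (intro mult_left_mono) auto
  moreover have "2/3 * c * eta * (real K * (U + X) / (2 * (1 - \<gamma>))) = (1 + 2 * \<gamma>) * \<gamma> * (U + X) / 3"
    using K_pos gamma_less_half by (simp add: c_def eta_def field_simps)
  moreover have "c * (\<Sum>i<K. normalized_weight w i * (xt i - X)) = (1 + 2 * \<gamma>) * \<gamma> * (X - U)"
  proof -
    have "c * (\<Sum>i<K. normalized_weight w i * (xt i - X)) = c * (\<gamma> / (1 - \<gamma>) * (X - U))"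
      unfolding X_def U_def by (simp add: normalized_weight_deviation[OF w])
    also have "\<dots> = (1 + 2 * \<gamma>) * \<gamma> * (X - U)"
      using gamma_less_half by (simp add: c_def field_simps)
    finally show ?thesis .
  qed
  moreover have "(c - 1) / real K * (\<Sum>i<K. xt i - X) = \<gamma> * (1 - 2 * \<gamma>) * (U - X)"
  proof -
    have c1: "c - 1 = \<gamma> * (1 - 2 * \<gamma>)" by (simp add: c_def algebra_simps)
    have "(c - 1) / real K * (\<Sum>i<K. xt i - X) = (c - 1) * (U - X)"
      using K_pos by (simp add: U_def sum_subtractf field_simps)
    then show ?thesis unfolding c1 .
  qed
  ultimately show ?thesis
    using expected_potential_update_le_moments[where xt = xt, OF w j xt] potential_drop_coefficients_le[OF \<open>0 \<le> U + X\<close>]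
    unfolding potential_drop_def Let_def X_def[symmetric] U_def[symmetric] by linarith
qed

lemma pmf_rex3_draw:
  assumes w: "positive_weights w"
  shows "pmf (rex3_draw K \<gamma> w) i = (if i < K then p w i else 0)"
  unfolding rex3_draw_def
proof (rule pmf_embed_pmf)
  show "0 \<le> (if i < K then p w i else 0)" for i
    using p_pos[OF w] by (simp add: less_imp_le)
  have "(\<integral>\<^sup>+ i. ennreal (if i < K then p w i else 0) \<partial>count_space UNIV) = (\<Sum>i<K. ennreal (p w i))"
    by (subst nn_integral_count_space'[of "{..<K}"]) auto
  also have "\<dots> = 1"
    using p_pos[OF w] sum_p[OF w] by (subst sum_ennreal) (auto intro: less_imp_le)
  finally show "(\<integral>\<^sup>+ i. ennreal (if i < K then p w i else 0) \<partial>count_space UNIV) = 1" .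
qed

lemma set_pmf_rex3_pairs:
  "positive_weights w \<Longrightarrow> set_pmf (rex3_pairs K \<gamma> w) \<subseteq> {..<K} \<times> {..<K}"
  by (auto simp: rex3_pairs_def set_pmf_iff pmf_rex3_draw split: if_splits)

lemma expectation_rex3_pairs:
  assumes w: "positive_weights w"
  shows "measure_pmf.expectation (rex3_pairs K \<gamma> w) f = pair_expectation w (\<lambda>a b. f (a, b))"
proof -
  have "measure_pmf.expectation (rex3_pairs K \<gamma> w) f
      = (\<Sum>ab\<in>{..<K} \<times> {..<K}. f ab * pmf (rex3_pairs K \<gamma> w) ab)"
    using set_pmf_rex3_pairs[OF w] by (intro integral_measure_pmf_real) auto
  also have "\<dots> = (\<Sum>a<K. \<Sum>b<K. f (a, b) * pmf (rex3_pairs K \<gamma> w) (a, b))"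
    by (simp add: sum.cartesian_product)
  finally show ?thesis
    by (simp add: pair_expectation_def rex3_pairs_def pmf_pair pmf_rex3_draw[OF w] ac_simps)
qed

lemma rex3_weights_support:
  "finite (set_pmf (rex3_weights K \<gamma> x n)) \<and> (\<forall>w\<in>set_pmf (rex3_weights K \<gamma> x n). positive_weights w)"
proof (induction n)
  case 0
  then show ?case by (simp add: positive_weights_def)
next
  case (Suc n)
  have "finite (set_pmf (rex3_pairs K \<gamma> w))" if "positive_weights w" for w
    using set_pmf_rex3_pairs[OF that] by (rule finite_subset) auto
  then show ?case using Suc positive_weights_update by auto
qed

lemma finite_set_pmf_rex3_weights: "finite (set_pmf (rex3_weights K \<gamma> x n))"
  using rex3_weights_support by blast

lemma positive_weights_rex3_weights:
  "w \<in> set_pmf (rex3_weights K \<gamma> x n) \<Longrightarrow> positive_weights w"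
  using rex3_weights_support by blast

lemma potential_initial: "potential j (\<lambda>_. 1) = real K / \<gamma> * ln (real K)"
  using K_pos gamma_pos by (simp add: potential_def eta_def algebra_simps)

lemma potential_nonneg:
  assumes w: "positive_weights w" and j: "j < K"
  shows "0 \<le> potential j w"
proof -
  define W where "W = (\<Sum>i<K. w i)"
  have w_pos: "\<And>i. i < K \<Longrightarrow> 0 < w i" using w by (simp add: positive_weights_def)
  have "w j \<le> W"
    unfolding W_def using j w_pos by (intro member_le_sum) (auto intro: less_imp_le)
  then have lnj: "ln (w j) \<le> ln W" using w_pos[OF j] by simp
  have "(\<Sum>i<K. ln (w i)) \<le> real K * ln (W / real K)"
    using sum_ln_le_card_mult_ln_mean[of "{..<K}" w] K_ge_2 w_pos
    by (simp add: W_def lessThan_empty_iff)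
  then have "ln (real K) + (\<Sum>i<K. ln (w i)) / real K \<le> ln W"
    using K_pos sum_weights_pos[OF w] by (simp add: W_def ln_div field_simps)
  then have "(c - 1) * (ln (real K) + (\<Sum>i<K. ln (w i)) / real K) \<le> (c - 1) * ln W"
    using c_ge_1 by (intro mult_left_mono) auto
  then show ?thesis
    using lnj eta_pos by (simp add: potential_def W_def[symmetric] algebra_simps)
qed

lemma expected_potential_step:
  assumes j: "j < K" and xt: "\<And>i. i < K \<Longrightarrow> 0 \<le> x (Suc n) i \<and> x (Suc n) i \<le> 1"
  shows "measure_pmf.expectation (rex3_weights K \<gamma> x (Suc n)) (potential j)
         \<le> measure_pmf.expectation (rex3_weights K \<gamma> x n) (potential j)
          - measure_pmf.expectation (rex3_weights K \<gamma> x n) (\<lambda>w. potential_drop (x (Suc n)) w j)"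
proof -
  let ?W = "rex3_weights K \<gamma> x n"
  let ?next = "\<lambda>w. map_pmf (rex3_update K \<gamma> (x (Suc n)) w) (rex3_pairs K \<gamma> w)"
  have fin: "finite (set_pmf (?next w))" if "w \<in> set_pmf ?W" for w
    unfolding set_map_pmf
    by (intro finite_imageI finite_subset[OF set_pmf_rex3_pairs[OF positive_weights_rex3_weights[OF that]]])
      auto
  have "measure_pmf.expectation (rex3_weights K \<gamma> x (Suc n)) (potential j)
      = measure_pmf.expectation ?W (\<lambda>w. measure_pmf.expectation (?next w) (potential j))"
    by (simp add: expectation_bind_pmf_finite[OF finite_set_pmf_rex3_weights fin])
  also have "\<dots> = measure_pmf.expectation ?W
      (\<lambda>w. pair_expectation w (\<lambda>a b. potential j (rex3_update K \<gamma> (x (Suc n)) w (a, b))))"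
    by (intro integral_cong_AE)
      (auto simp: AE_measure_pmf_iff expectation_rex3_pairs positive_weights_rex3_weights)
  also have "\<dots> \<le> measure_pmf.expectation ?W (\<lambda>w. potential j w - potential_drop (x (Suc n)) w j)"
    by (intro integral_mono_AE integrable_measure_pmf_finite finite_set_pmf_rex3_weights)
      (auto simp: AE_measure_pmf_iff intro: expected_potential_update_le[OF _ j xt]
        positive_weights_rex3_weights)
  also have "\<dots> = measure_pmf.expectation ?W (potential j)
      - measure_pmf.expectation ?W (\<lambda>w. potential_drop (x (Suc n)) w j)"
    by (intro Bochner_Integration.integral_diff integrable_measure_pmf_finite
        finite_set_pmf_rex3_weights)
  finally show ?thesis .
qed

lemma sum_expected_potential_drop_le:
  assumes j: "j < K" and x: "\<And>t i. t \<in> {1..T} \<Longrightarrow> i < K \<Longrightarrow> 0 \<le> x t i \<and> x t i \<le> 1"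
  shows "(\<Sum>t\<in>{1..T}. measure_pmf.expectation (rex3_weights K \<gamma> x (t - 1))
            (\<lambda>w. potential_drop (x t) w j)) \<le> real K / \<gamma> * ln (real K)"
proof -
  have telescope: "measure_pmf.expectation (rex3_weights K \<gamma> x n) (potential j)
        + (\<Sum>t\<in>{1..n}. measure_pmf.expectation (rex3_weights K \<gamma> x (t - 1))
            (\<lambda>w. potential_drop (x t) w j)) \<le> real K / \<gamma> * ln (real K)"
    if "n \<le> T" for n
    using that
  proof (induction n)
    case 0
    then show ?case by (simp add: potential_initial)
  next
    case (Suc n)
    have "\<And>i. i < K \<Longrightarrow> 0 \<le> x (Suc n) i \<and> x (Suc n) i \<le> 1"
      using Suc.prems by (intro x) auto
    from expected_potential_step[of j x n, OF j this] show ?case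
      using Suc by (simp add: sum.cl_ivl_Suc)
  qed
  have "0 \<le> measure_pmf.expectation (rex3_weights K \<gamma> x T) (potential j)"
    by (intro integral_nonneg_AE)
      (auto simp: AE_measure_pmf_iff intro: potential_nonneg[OF _ j] positive_weights_rex3_weights)
  then show ?thesis using telescope[OF order.refl] by linarith
qed

lemma expected_potential_drop:
  "measure_pmf.expectation (rex3_weights K \<gamma> x n) (\<lambda>w. potential_drop xt w j)
   = xt j + (4 - exp 1) * \<gamma> * ((\<Sum>i<K. xt i) / real K)
     - (1 + exp 1 * \<gamma>) * measure_pmf.expectation (rex3_weights K \<gamma> x n) (\<lambda>w. mean_reward w xt)"
proof -
  have "potential_drop xt w j = xt j + (4 - exp 1) * \<gamma> * ((\<Sum>i<K. xt i) / real K)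
      - (1 + exp 1 * \<gamma>) * mean_reward w xt" for w
    by (simp add: potential_drop_def Let_def algebra_simps)
  then show ?thesis
    by (simp add: integrable_measure_pmf_finite finite_set_pmf_rex3_weights)
qed

lemma rex3_expected_gain_eq:
  "rex3_expected_gain K \<gamma> T x
   = (\<Sum>t\<in>{1..T}. measure_pmf.expectation (rex3_weights K \<gamma> x (t - 1)) (\<lambda>w. mean_reward w (x t)))"
  unfolding rex3_expected_gain_def rex3_choice_def
proof (intro sum.cong refl)
  fix t
  let ?W = "rex3_weights K \<gamma> x (t - 1)"
  have fin: "finite (set_pmf (rex3_pairs K \<gamma> w))" if "w \<in> set_pmf ?W" for w
    by (rule finite_subset[OF set_pmf_rex3_pairs[OF positive_weights_rex3_weights[OF that]]]) auto
  have "measure_pmf.expectation (?W \<bind> rex3_pairs K \<gamma>) (\<lambda>(a, b). (x t a + x t b) / 2)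
      = measure_pmf.expectation ?W
          (\<lambda>w. measure_pmf.expectation (rex3_pairs K \<gamma> w) (\<lambda>(a, b). (x t a + x t b) / 2))"
    by (rule expectation_bind_pmf_finite[OF finite_set_pmf_rex3_weights fin])
  also have "\<dots> = measure_pmf.expectation ?W (\<lambda>w. mean_reward w (x t))"
    by (intro integral_cong_AE)
      (auto simp: AE_measure_pmf_iff expectation_rex3_pairs pair_expectation_avg_reward
        positive_weights_rex3_weights)
  finally show "measure_pmf.expectation (?W \<bind> rex3_pairs K \<gamma>) (\<lambda>(a, b). (x t a + x t b) / 2)
      = measure_pmf.expectation ?W (\<lambda>w. mean_reward w (x t))" .
qed

lemma expected_regret_le:
  assumes j: "j < K" and x: "\<And>t i. t \<in> {1..T} \<Longrightarrow> i < K \<Longrightarrow> 0 \<le> x t i \<and> x t i \<le> 1"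
  shows "(\<Sum>t\<in>{1..T}. x t j) - rex3_expected_gain K \<gamma> T x
         \<le> real K / \<gamma> * ln (real K)
            + \<gamma> * (exp 1 * rex3_expected_gain K \<gamma> T x - (4 - exp 1) * EG_unif K T x)"
proof -
  have "EG_unif K T x = (\<Sum>t\<in>{1..T}. (\<Sum>i<K. x t i) / real K)"
    by (simp add: EG_unif_def sum_divide_distrib)
  then have "(\<Sum>t\<in>{1..T}. measure_pmf.expectation (rex3_weights K \<gamma> x (t - 1))
               (\<lambda>w. potential_drop (x t) w j))
      = (\<Sum>t\<in>{1..T}. x t j) + (4 - exp 1) * \<gamma> * EG_unif K T x
        - (1 + exp 1 * \<gamma>) * rex3_expected_gain K \<gamma> T x"
    by (simp add: expected_potential_drop rex3_expected_gain_eq sum.distrib sum_subtractf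
        sum_distrib_left)
  moreover have "\<gamma> * (exp 1 * rex3_expected_gain K \<gamma> T x - (4 - exp 1) * EG_unif K T x)
      - ((\<Sum>t\<in>{1..T}. x t j) - rex3_expected_gain K \<gamma> T x)
      = - ((\<Sum>t\<in>{1..T}. x t j) + (4 - exp 1) * \<gamma> * EG_unif K T x
           - (1 + exp 1 * \<gamma>) * rex3_expected_gain K \<gamma> T x)"
    by (simp add: algebra_simps)
  ultimately show ?thesis
    using sum_expected_potential_drop_le[where T = T and x = x, OF j x] by linarith
qed

end

theorem theorem1:
  fixes K T :: nat and \<gamma> :: real and x :: "nat \<Rightarrow> nat \<Rightarrow> real"
  assumes "K \<ge> 2" and "T \<ge> 1"
    and "\<And>t i. t \<in> {1..T} \<Longrightarrow> i < K \<Longrightarrow> 0 \<le> x t i \<and> x t i \<le> 1"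
    and "0 < \<gamma>" and "\<gamma> < 1 / 2"
  shows "G_max K T x - rex3_expected_gain K \<gamma> T x
         \<le> real K / \<gamma> * ln (real K)
            + \<gamma> * (exp 1 * rex3_expected_gain K \<gamma> T x - (4 - exp 1) * EG_unif K T x)"
proof -
  interpret rex3 K \<gamma> using assms by unfold_locales auto
  have "G_max K T x \<in> (\<lambda>i. \<Sum>t\<in>{1..T}. x t i) ` {..<K}"
    unfolding G_max_def using assms(1) by (intro Max_in) (auto simp: lessThan_empty_iff)
  then obtain j where "j < K" and "G_max K T x = (\<Sum>t\<in>{1..T}. x t j)" by auto
  then show ?thesis using expected_regret_le[OF \<open>j < K\<close> assms(3)] by simp
qed

end
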